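(* For every $n>2$, the set $\mathrm{FC}(B_n)$ is not Poirier type $B$ Schur-positive.
   Context: $B_n$: signed permutations $w=[w_1,\ldots,w_n]$ of $\{\pm1,\ldots,\pm n\}$ with Coxeter generators $s_0=[-1,2,\ldots,n]$, $s_i=[1,\ldots,i+1,i,\ldots,n]$; $\mathrm{FC}(B_n)$ = fully commutative elements (any two reduced expressions related by commutation relations only). $\mathrm{Neg}(w)=\{i\mid w_i<0\}$. Let $<_r$ be the order $-1<_r-2<_r\cdots<_r-n<_r1<_r2<_r\cdots<_rn$ and $\mathrm{rDes}(w)=\{1\le i<n\mid w_i>_rw_{i+1}\}$. With variable sets $X=(x_1,x_2,\ldots)$, $Y=(y_1,y_2,\ldots)$, Poirier's function is $F^P_w(X,Y)=\sum z_{i_1}\cdots z_{i_n}$ over $1\le i_1\le\cdots\le i_n$ with $i_j<i_{j+1}$ for $j\in\mathrm{rDes}(w)$, where $z_{i_j}=y_{i_j}$ if $j\in\mathrm{Neg}(w)$ and $z_{i_j}=x_{i_j}$ otherwise. A set $A\subseteq B_n$ is Poirier type $B$ Schur-positive if $\mathcal{Q}^P(A)=\sum_{w\in A}F^P_w(X,Y)$ is symmetric in $X$ and in $Y$ and is a non-negative linear combination of products $s_\lambda(X)s_\mu(Y)$ of Schur functions. *)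

theory Defs
  imports Complex_Main
begin

text \<open>A signed permutation w = [w_1,...,w_n] is represented as a function
  nat => int with w i = w_i for i in {1..n} and w i = i outside {1..n}.\<close>

definition signed_perms :: "nat \<Rightarrow> (nat \<Rightarrow> int) set" where
  "signed_perms n = {w. (\<forall>i. i \<notin> {1..n} \<longrightarrow> w i = int i)
      \<and> (\<forall>i\<in>{1..n}. w i \<noteq> 0)
      \<and> bij_betw (\<lambda>i. nat \<bar>w i\<bar>) {1..n} {1..n}}"

definition sapp :: "(nat \<Rightarrow> int) \<Rightarrow> int \<Rightarrow> int" where
  "sapp u j = (if 0 \<le> j then u (nat j) else - u (nat (- j)))"

definition scomp :: "(nat \<Rightarrow> int) \<Rightarrow> (nat \<Rightarrow> int) \<Rightarrow> nat \<Rightarrow> int" where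
  "scomp u v = (\<lambda>i. sapp u (v i))"

definition gen :: "nat \<Rightarrow> nat \<Rightarrow> int" where
  "gen k = (if k = 0 then (\<lambda>i. if i = 1 then -1 else int i)
            else (\<lambda>i. if i = k then int (k+1) else if i = k+1 then int k else int i))"

fun word_eval :: "nat list \<Rightarrow> nat \<Rightarrow> int" where
  "word_eval [] = (\<lambda>i. int i)"
| "word_eval (a # as) = scomp (gen a) (word_eval as)"

definition is_word :: "nat \<Rightarrow> nat list \<Rightarrow> bool" where
  "is_word n u \<longleftrightarrow> set u \<subseteq> {..<n}"

definition reduced_expr :: "nat \<Rightarrow> nat list \<Rightarrow> (nat \<Rightarrow> int) \<Rightarrow> bool" where
  "reduced_expr n u w \<longleftrightarrow> is_word n u \<and> word_eval u = w \<and>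
     (\<forall>v. is_word n v \<and> word_eval v = w \<longrightarrow> length u \<le> length v)"

definition comm_step :: "nat list \<Rightarrow> nat list \<Rightarrow> bool" where
  "comm_step u v \<longleftrightarrow> (\<exists>p q a b. u = p @ [a, b] @ q \<and> v = p @ [b, a] @ q \<and> a \<noteq> b \<and>
      scomp (gen a) (gen b) = scomp (gen b) (gen a))"

definition FC :: "nat \<Rightarrow> (nat \<Rightarrow> int) set" where
  "FC n = {w \<in> signed_perms n. \<forall>u v. reduced_expr n u w \<and> reduced_expr n v w \<longrightarrow> comm_step\<^sup>*\<^sup>* u v}"

definition Neg :: "nat \<Rightarrow> (nat \<Rightarrow> int) \<Rightarrow> nat set" where
  "Neg n w = {i \<in> {1..n}. w i < 0}"

text \<open>The order -1 <_r -2 <_r ... <_r -n <_r 1 <_r ... <_r n.\<close>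
definition rless :: "int \<Rightarrow> int \<Rightarrow> bool" where
  "rless a b \<longleftrightarrow> (a < 0 \<and> 0 < b) \<or> (a < 0 \<and> b < 0 \<and> - a < - b) \<or> (0 < a \<and> 0 < b \<and> a < b)"

definition rDes :: "nat \<Rightarrow> (nat \<Rightarrow> int) \<Rightarrow> nat set" where
  "rDes n w = {i. 1 \<le> i \<and> i < n \<and> rless (w (i+1)) (w i)}"

text \<open>Monomials in X and Y are pairs of exponent functions (alpha, beta); alpha k is the
  exponent of x_k (variables are indexed from 1). The coefficient of x^alpha y^beta in
  F^P_w is the number of index sequences i_1 <= ... <= i_n (i_j >= 1), strict at rDes(w),
  whose associated monomial z_{i_1} ... z_{i_n} equals x^alpha y^beta.\<close>
definition poirier_coeff :: "nat \<Rightarrow> (nat \<Rightarrow> int) \<Rightarrow> (nat \<Rightarrow> nat) \<Rightarrow> (nat \<Rightarrow> nat) \<Rightarrow> nat" where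
  "poirier_coeff n w \<alpha> \<beta> = card {ix :: nat \<Rightarrow> nat.
      (\<forall>j. j \<notin> {1..n} \<longrightarrow> ix j = 0) \<and> (\<forall>j\<in>{1..n}. 1 \<le> ix j)
    \<and> (\<forall>j. 1 \<le> j \<and> j < n \<longrightarrow> ix j \<le> ix (j+1))
    \<and> (\<forall>j\<in>rDes n w. ix j < ix (j+1))
    \<and> (\<forall>k. \<alpha> k = card {j \<in> {1..n}. j \<notin> Neg n w \<and> ix j = k})
    \<and> (\<forall>k. \<beta> k = card {j \<in> {1..n}. j \<in> Neg n w \<and> ix j = k})}"

definition QP_coeff :: "nat \<Rightarrow> (nat \<Rightarrow> int) set \<Rightarrow> (nat \<Rightarrow> nat) \<Rightarrow> (nat \<Rightarrow> nat) \<Rightarrow> nat" where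
  "QP_coeff n A \<alpha> \<beta> = (\<Sum>w\<in>A. poirier_coeff n w \<alpha> \<beta>)"

definition is_partition :: "nat list \<Rightarrow> bool" where
  "is_partition la \<longleftrightarrow> sorted_wrt (\<ge>) la \<and> (\<forall>x\<in>set la. 0 < x)"

definition cells :: "nat list \<Rightarrow> (nat \<times> nat) set" where
  "cells la = {(r, c). r < length la \<and> c < la ! r}"

definition is_ssyt :: "nat list \<Rightarrow> (nat \<times> nat \<Rightarrow> nat) \<Rightarrow> bool" where
  "is_ssyt la T \<longleftrightarrow> (\<forall>x. x \<notin> cells la \<longrightarrow> T x = 0) \<and> (\<forall>x\<in>cells la. 1 \<le> T x)
     \<and> (\<forall>r c. (r, c+1) \<in> cells la \<longrightarrow> T (r, c) \<le> T (r, c+1))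
     \<and> (\<forall>r c. (r+1, c) \<in> cells la \<longrightarrow> T (r, c) < T (r+1, c))"

definition schur_coeff :: "nat list \<Rightarrow> (nat \<Rightarrow> nat) \<Rightarrow> nat" where
  "schur_coeff la \<alpha> = card {T. is_ssyt la T \<and> (\<forall>k. \<alpha> k = card {x \<in> cells la. T x = k})}"

text \<open>Symmetry in X (resp. Y): invariance under every permutation of the variables x_1, x_2, ...\<close>
definition poirier_schur_positive :: "nat \<Rightarrow> (nat \<Rightarrow> int) set \<Rightarrow> bool" where
  "poirier_schur_positive n A \<longleftrightarrow>
     (\<forall>\<sigma> \<alpha> \<beta>. bij \<sigma> \<and> \<sigma> 0 = 0 \<longrightarrow> QP_coeff n A (\<alpha> \<circ> \<sigma>) \<beta> = QP_coeff n A \<alpha> \<beta>)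
   \<and> (\<forall>\<sigma> \<alpha> \<beta>. bij \<sigma> \<and> \<sigma> 0 = 0 \<longrightarrow> QP_coeff n A \<alpha> (\<beta> \<circ> \<sigma>) = QP_coeff n A \<alpha> \<beta>)
   \<and> (\<exists>S c. finite S \<and> (\<forall>p\<in>S. is_partition (fst p) \<and> is_partition (snd p))
        \<and> (\<forall>p\<in>S. (0::real) \<le> c p)
        \<and> (\<forall>\<alpha> \<beta>. real (QP_coeff n A \<alpha> \<beta>) =
              (\<Sum>p\<in>S. c p * real (schur_coeff (fst p) \<alpha>) * real (schur_coeff (snd p) \<beta>))))"

end

theory Submission
  imports Defs
begin

text \<open>The coefficient of \<open>x\<^sub>2\<^sup>n\<^sup>-\<^sup>2 y\<^sub>1 y\<^sub>2\<close> in \<open>Q\<^sup>P(FC(B\<^sub>n))\<close> is at least 2: it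
  receives a contribution from each of the fully commutative elements
  \<open>s\<^sub>0 s\<^sub>1 s\<^sub>0 = [-2, -1, 3, \<dots>, n]\<close> and \<open>s\<^sub>0 s\<^sub>2 s\<^sub>1 s\<^sub>0 = [-3, -1, 2, 4, \<dots>, n]\<close>.
  The coefficient of \<open>x\<^sub>1\<^sup>n\<^sup>-\<^sup>2 y\<^sub>1 y\<^sub>2\<close> is at most 1: a filling for it forces
  \<open>w = [-a, increasing positive values, -b]\<close>, with at most one filling, and such a \<open>w\<close>
  has two reduced words ordering two non-commuting generators differently unless
  \<open>(a, b) = (2, 1)\<close>. Indeed, lowering \<open>a\<close> or \<open>b\<close> by left descents leads to
  \<open>(a, b) = (1, 2)\<close> or \<open>(3, 1)\<close>, where two non-commuting left descents are visible.
  Hence \<open>Q\<^sup>P(FC(B\<^sub>n))\<close> is not symmetric in \<open>X\<close>. Reduced words are controlled by the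
  count of type B inversions, which is the Coxeter length.\<close>

section \<open>Generators acting on signed values\<close>

definition gen_act :: "nat \<Rightarrow> int \<Rightarrow> int" where
  "gen_act a x = (if a = 0 then (if x = 1 then -1 else if x = -1 then 1 else x)
     else if x = int a then int a + 1 else if x = int a + 1 then int a
     else if x = - int a then - int a - 1 else if x = - int a - 1 then - int a else x)"

definition gen_mult :: "nat \<Rightarrow> (nat \<Rightarrow> int) \<Rightarrow> nat \<Rightarrow> int" where
  "gen_mult a w = scomp (gen a) w"

lemma sapp_gen: "sapp (gen a) x = gen_act a x"
  unfolding sapp_def gen_def gen_act_def by (cases "x \<ge> 0") (simp_all add: nat_eq_iff)

lemma gen_eq_gen_act: "gen a i = gen_act a (int i)"
  using sapp_gen[of a "int i"] by (simp add: sapp_def)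

lemma gen_mult_apply: "gen_mult a w i = gen_act a (w i)"
  by (simp add: gen_mult_def scomp_def sapp_gen)

lemma gen_act_gen_act: "gen_act a (gen_act a x) = x"
  by (auto simp: gen_act_def)

lemma gen_mult_gen_mult: "gen_mult a (gen_mult a w) = w"
  by (rule ext) (simp add: gen_mult_apply gen_act_gen_act)

lemma nat_abs_gen_act: "nat \<bar>gen_act a x\<bar> = (if a = 0 then nat \<bar>x\<bar>
   else if nat \<bar>x\<bar> = a then a + 1 else if nat \<bar>x\<bar> = a + 1 then a else nat \<bar>x\<bar>)"
  unfolding gen_act_def by (cases "x \<ge> 0"; simp; linarith)

lemma gen_act_eq_0_iff: "gen_act a x = 0 \<longleftrightarrow> x = 0"
  by (auto simp: gen_act_def)

lemma gen_act_preserves_order: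
  assumes "1 \<le> a" "\<not> ((\<bar>x\<bar> = int a \<and> \<bar>y\<bar> = int a + 1) \<or> (\<bar>x\<bar> = int a + 1 \<and> \<bar>y\<bar> = int a))"
  shows "(gen_act a y < gen_act a x \<longleftrightarrow> y < x) \<and> (gen_act a x + gen_act a y < 0 \<longleftrightarrow> x + y < 0)"
proof -
  define A where "A = int a"
  define shift where "shift z = (if z = A then 1 else if z = A + 1 then -1
    else if z = - A then -1 else if z = - A - 1 then 1 else 0 :: int)" for z
  have act: "gen_act a z = z + shift z" for z
    using assms(1) by (auto simp: gen_act_def shift_def A_def)
  have A: "1 \<le> A" and c: "\<not> ((\<bar>x\<bar> = A \<and> \<bar>y\<bar> = A + 1) \<or> (\<bar>x\<bar> = A + 1 \<and> \<bar>y\<bar> = A))"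
    using assms by (simp_all add: A_def)
  have "x = A \<or> x = A + 1 \<or> x = - A \<or> x = - A - 1 \<or> (x \<noteq> A \<and> x \<noteq> A + 1 \<and> x \<noteq> - A \<and> x \<noteq> - A - 1)"
    and "y = A \<or> y = A + 1 \<or> y = - A \<or> y = - A - 1 \<or> (y \<noteq> A \<and> y \<noteq> A + 1 \<and> y \<noteq> - A \<and> y \<noteq> - A - 1)"
    by blast+
  then have "(y + shift y < x + shift x \<longleftrightarrow> y < x) \<and> (x + shift x + (y + shift y) < 0 \<longleftrightarrow> x + y < 0)"
    using A c unfolding shift_def by (elim disjE conjE; simp; arith)
  then show ?thesis by (simp add: act)
qed

lemma gen_act_zero_preserves_order:
  assumes "\<not> (\<bar>x\<bar> = 1 \<and> \<bar>y\<bar> = 1)" "x \<noteq> 0" "y \<noteq> 0"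
  shows "(gen_act 0 y < gen_act 0 x \<longleftrightarrow> y < x) \<and> (gen_act 0 x + gen_act 0 y < 0 \<longleftrightarrow> x + y < 0)"
  using assms unfolding gen_act_def by (smt (verit))

definition sp_id :: "nat \<Rightarrow> int" where
  "sp_id = (\<lambda>i. int i)"

lemma sp_id_in_signed_perms: "sp_id \<in> signed_perms n"
  unfolding signed_perms_def sp_id_def by (auto intro!: bij_betw_byWitness[where f'="\<lambda>i. i"])

lemma signed_perms_outside: "w \<in> signed_perms n \<Longrightarrow> i \<notin> {1..n} \<Longrightarrow> w i = int i"
  by (auto simp: signed_perms_def)

lemma signed_perms_nonzero: "w \<in> signed_perms n \<Longrightarrow> i \<in> {1..n} \<Longrightarrow> w i \<noteq> 0"
  by (auto simp: signed_perms_def)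

lemma signed_perms_abs_eq_iff:
  assumes "w \<in> signed_perms n" "i \<in> {1..n}" "j \<in> {1..n}"
  shows "\<bar>w i\<bar> = \<bar>w j\<bar> \<longleftrightarrow> i = j"
proof -
  have "inj_on (\<lambda>i. nat \<bar>w i\<bar>) {1..n}"
    using assms(1) by (auto simp: signed_perms_def bij_betw_def)
  then show ?thesis using assms(2,3) by (auto dest: inj_onD[of _ _ i j])
qed

lemma signed_perms_abs_image:
  "w \<in> signed_perms n \<Longrightarrow> (\<lambda>i. nat \<bar>w i\<bar>) ` {1..n} = {1..n}"
  by (auto simp: signed_perms_def bij_betw_def)

lemma signed_perms_abs_surj:
  assumes "w \<in> signed_perms n" "v \<in> {1..n}"
  obtains p where "p \<in> {1..n}" "\<bar>w p\<bar> = int v"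
proof -
  have "v \<in> (\<lambda>i. nat \<bar>w i\<bar>) ` {1..n}" using signed_perms_abs_image[OF assms(1)] assms(2) by simp
  then obtain p where "p \<in> {1..n}" "v = nat \<bar>w p\<bar>" by blast
  then show ?thesis using that by auto
qed

lemma signed_perms_abs_le:
  assumes "w \<in> signed_perms n" "i \<in> {1..n}"
  shows "\<bar>w i\<bar> \<le> int n"
proof -
  have "nat \<bar>w i\<bar> \<in> {1..n}" using signed_perms_abs_image[OF assms(1)] assms(2) by blast
  then show ?thesis by auto
qed

lemma gen_mult_in_signed_perms:
  assumes w: "w \<in> signed_perms n" and a: "a < n"
  shows "gen_mult a w \<in> signed_perms n"
proof -
  define f where "f v = (if a = 0 then v else if v = a then a + 1 else if v = a + 1 then a else v)" for v
  have "bij_betw f {1..n} {1..n}"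
    by (rule bij_betw_byWitness[where f'=f]) (use a in \<open>auto simp: f_def\<close>)
  moreover have "(\<lambda>i. nat \<bar>gen_mult a w i\<bar>) = f \<circ> (\<lambda>i. nat \<bar>w i\<bar>)"
    by (rule ext) (simp add: gen_mult_apply nat_abs_gen_act f_def)
  ultimately have "bij_betw (\<lambda>i. nat \<bar>gen_mult a w i\<bar>) {1..n} {1..n}"
    using w bij_betw_trans by (fastforce simp: signed_perms_def)
  moreover have "gen_mult a w i = int i" if "i \<notin> {1..n}" for i
    using that a signed_perms_outside[OF w that] by (auto simp: gen_mult_apply gen_act_def)
  ultimately show ?thesis
    using w by (auto simp: signed_perms_def gen_mult_apply gen_act_eq_0_iff)
qed

lemma finite_signed_perms: "finite (signed_perms n)"
proof -
  let ?H = "{h :: nat \<Rightarrow> int. \<forall>x. (x \<in> {1..n} \<longrightarrow> h x \<in> {- 2 * int n..int n}) \<and> (x \<notin> {1..n} \<longrightarrow> h x = 0)}"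
  have "signed_perms n \<subseteq> (\<lambda>h x. h x + int x) ` ?H"
  proof
    fix w assume w: "w \<in> signed_perms n"
    have "(\<lambda>x. w x - int x) \<in> ?H"
      using signed_perms_abs_le[OF w] signed_perms_outside[OF w] by fastforce
    then show "w \<in> (\<lambda>h x. h x + int x) ` ?H" by (rule rev_image_eqI) simp
  qed
  moreover have "finite ?H" by (rule finite_set_of_finite_funs) auto
  ultimately show ?thesis by (meson finite_imageI finite_subset)
qed

section \<open>The length function\<close>

text \<open>The Coxeter length in \<open>B\<^sub>n\<close> counts the pairs \<open>i < j\<close> with \<open>w\<^sub>j < w\<^sub>i\<close>
  (flag \<open>False\<close>) and the pairs \<open>i \<le> j\<close> with \<open>w\<^sub>i + w\<^sub>j < 0\<close> (flag \<open>True\<close>).\<close>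

definition inversions :: "nat \<Rightarrow> (nat \<Rightarrow> int) \<Rightarrow> (nat \<times> nat \<times> bool) set" where
  "inversions n w = {(i, j, t). 1 \<le> i \<and> i \<le> j \<and> j \<le> n \<and>
     (if t then w i + w j < 0 else i < j \<and> w j < w i)}"

definition blength :: "nat \<Rightarrow> (nat \<Rightarrow> int) \<Rightarrow> nat" where
  "blength n w = card (inversions n w)"

definition left_descent :: "nat \<Rightarrow> nat \<Rightarrow> (nat \<Rightarrow> int) \<Rightarrow> bool" where
  "left_descent n a w \<longleftrightarrow> blength n (gen_mult a w) < blength n w"

lemma finite_inversions: "finite (inversions n w)"
  by (rule finite_subset[of _ "{0..n} \<times> {0..n} \<times> UNIV"]) (auto simp: inversions_def)

lemma blength_sp_id: "blength n sp_id = 0"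
proof -
  have "inversions n sp_id = {}" by (auto simp: inversions_def sp_id_def)
  then show ?thesis by (simp add: blength_def)
qed

lemma mem_inversions_gen_mult:
  assumes w: "w \<in> signed_perms n" and a: "1 \<le> a"
    and p: "p \<in> {1..n}" "\<bar>w p\<bar> = int a" and q: "q \<in> {1..n}" "\<bar>w q\<bar> = int a + 1"
  shows "x \<in> inversions n (gen_mult a w) \<longleftrightarrow>
    (x \<in> inversions n w) \<noteq> (x = (min p q, max p q, (w p < 0) \<noteq> (w q < 0)))"
proof -
  obtain i j t where x: "x = (i, j, t)" by (cases x)
  have pq: "p \<noteq> q" using p q by auto
  show ?thesis
  proof (cases "1 \<le> i \<and> i \<le> j \<and> j \<le> n")
    case False
    then show ?thesis using p q x by (auto simp: inversions_def min_def max_def)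
  next
    case ij: True
    show ?thesis
    proof (cases "(i = p \<and> j = q) \<or> (i = q \<and> j = p)")
      case True
      have sp: "w p = int a \<or> w p = - int a" and sq: "w q = int a + 1 \<or> w q = - int a - 1"
        using p q by auto
      have ij': "i < j" and mm: "min p q = i" "max p q = j" using True ij pq by auto
      have act: "gen_act a (int a) = int a + 1" "gen_act a (int a + 1) = int a"
        "gen_act a (- int a) = - int a - 1" "gen_act a (- int a - 1) = - int a"
        using a by (auto simp: gen_act_def)
      show ?thesis unfolding x mm using True ij ij' sp sq a
        by (elim disjE conjE; cases t; simp add: inversions_def gen_mult_apply act)
    next
      case False
      moreover have "i \<in> {1..n}" "j \<in> {1..n}" using ij by auto
      ultimately have "\<not> ((\<bar>w i\<bar> = int a \<and> \<bar>w j\<bar> = int a + 1) \<or> (\<bar>w i\<bar> = int a + 1 \<and> \<bar>w j\<bar> = int a))"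
        using signed_perms_abs_eq_iff[OF w, of i p] signed_perms_abs_eq_iff[OF w, of j q]
          signed_perms_abs_eq_iff[OF w, of i q] signed_perms_abs_eq_iff[OF w, of j p] p q by auto
      moreover have "(i, j) \<noteq> (min p q, max p q)"
        using False pq by (auto simp: min_def max_def split: if_splits)
      ultimately show ?thesis using gen_act_preserves_order[OF a] unfolding x
        by (auto simp: inversions_def gen_mult_apply)
    qed
  qed
qed

lemma mem_inversions_gen_mult_zero:
  assumes w: "w \<in> signed_perms n" and p: "p \<in> {1..n}" "\<bar>w p\<bar> = 1"
  shows "x \<in> inversions n (gen_mult 0 w) \<longleftrightarrow> (x \<in> inversions n w) \<noteq> (x = (p, p, True))"
proof -
  obtain i j t where x: "x = (i, j, t)" by (cases x)
  show ?thesis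
  proof (cases "1 \<le> i \<and> i \<le> j \<and> j \<le> n")
    case False
    then show ?thesis using p x by (auto simp: inversions_def)
  next
    case ij: True
    show ?thesis
    proof (cases "i = p \<and> j = p")
      case True
      have "w p = 1 \<or> w p = - 1" using p by auto
      then show ?thesis using True ij unfolding x
        by (auto simp: inversions_def gen_mult_apply gen_act_def)
    next
      case False
      moreover have "i \<in> {1..n}" "j \<in> {1..n}" using ij by auto
      ultimately have "\<not> (\<bar>w i\<bar> = 1 \<and> \<bar>w j\<bar> = 1)"
        using signed_perms_abs_eq_iff[OF w, of i p] signed_perms_abs_eq_iff[OF w, of j p] p by auto
      then show ?thesis
        using gen_act_zero_preserves_order signed_perms_nonzero[OF w] ij False unfolding x
        by (auto simp: inversions_def gen_mult_apply)
    qed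
  qed
qed

lemma card_toggle:
  assumes "finite A" "\<forall>x. x \<in> B \<longleftrightarrow> (x \<in> A) \<noteq> (x = e)"
  shows "card B = (if e \<in> A then card A - 1 else Suc (card A))"
proof (cases "e \<in> A")
  case True
  then have "B = A - {e}" using assms(2) by auto
  then show ?thesis using True by simp
next
  case False
  then have "B = insert e A" using assms(2) by auto
  then show ?thesis using False assms(1) by simp
qed

lemma left_descent_toggle:
  assumes "\<forall>x. x \<in> inversions n (gen_mult a w) \<longleftrightarrow> (x \<in> inversions n w) \<noteq> (x = e)"
  shows "left_descent n a w \<longleftrightarrow> e \<in> inversions n w"
    and "if left_descent n a w then Suc (blength n (gen_mult a w)) = blength n w
         else blength n (gen_mult a w) = Suc (blength n w)"
proof -
  have len: "blength n (gen_mult a w) =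
      (if e \<in> inversions n w then blength n w - 1 else Suc (blength n w))"
    unfolding blength_def by (rule card_toggle[OF finite_inversions assms])
  have "e \<in> inversions n w \<Longrightarrow> blength n w \<noteq> 0"
    by (auto simp: blength_def finite_inversions)
  then show "left_descent n a w \<longleftrightarrow> e \<in> inversions n w"
    and "if left_descent n a w then Suc (blength n (gen_mult a w)) = blength n w
         else blength n (gen_mult a w) = Suc (blength n w)"
    using len by (auto simp: left_descent_def)
qed

lemma left_descent_iff:
  assumes w: "w \<in> signed_perms n" and a: "1 \<le> a"
    and p: "p \<in> {1..n}" "\<bar>w p\<bar> = int a" and q: "q \<in> {1..n}" "\<bar>w q\<bar> = int a + 1"
  shows "left_descent n a w \<longleftrightarrow> (if (w p < 0) = (w q < 0)
    then (if p < q then w q < w p else w p < w q) else w p + w q < 0)"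
proof -
  have "p \<noteq> q" using p q by auto
  then show ?thesis
    using left_descent_toggle(1)[OF allI, OF mem_inversions_gen_mult[OF w a p q]] p q
    by (auto simp: inversions_def min_def max_def)
qed

lemma left_descent_zero_iff:
  assumes w: "w \<in> signed_perms n" and p: "p \<in> {1..n}" "\<bar>w p\<bar> = 1"
  shows "left_descent n 0 w \<longleftrightarrow> w p < 0"
  using left_descent_toggle(1)[OF allI, OF mem_inversions_gen_mult_zero[OF w p]] p
  by (auto simp: inversions_def)

lemma blength_gen_mult:
  assumes w: "w \<in> signed_perms n" and a: "a < n"
  shows "if left_descent n a w then Suc (blength n (gen_mult a w)) = blength n w
         else blength n (gen_mult a w) = Suc (blength n w)"
proof (cases "a = 0")
  case True
  have "1 \<in> {1..n}" using a by simp
  then obtain p where "p \<in> {1..n}" "\<bar>w p\<bar> = 1" by (rule signed_perms_abs_surj[OF w]) simp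
  then show ?thesis
    using left_descent_toggle(2)[OF allI, OF mem_inversions_gen_mult_zero[OF w]] True by blast
next
  case False
  have "a \<in> {1..n}" "a + 1 \<in> {1..n}" using a False by auto
  then obtain p q where p: "p \<in> {1..n}" "\<bar>w p\<bar> = int a" and q: "q \<in> {1..n}" "\<bar>w q\<bar> = int a + 1"
    using signed_perms_abs_surj[OF w] by (metis of_nat_Suc add.commute Suc_eq_plus1)
  show ?thesis
    using left_descent_toggle(2)[OF allI, OF mem_inversions_gen_mult[OF w _ p q]] False by simp
qed

section \<open>Reduced words\<close>

lemma word_eval_Nil_eq: "word_eval [] = sp_id"
  by (simp add: sp_id_def)

lemma word_eval_Cons_eq: "word_eval (a # u) = gen_mult a (word_eval u)"
  by (simp add: gen_mult_def)

declare word_eval.simps [simp del]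

lemma word_eval_in_signed_perms: "is_word n u \<Longrightarrow> word_eval u \<in> signed_perms n"
  by (induction u)
    (auto simp: word_eval_Nil_eq word_eval_Cons_eq is_word_def sp_id_in_signed_perms
      intro: gen_mult_in_signed_perms)

lemma blength_word_eval_le: "is_word n u \<Longrightarrow> blength n (word_eval u) \<le> length u"
proof (induction u)
  case Nil
  then show ?case by (simp add: word_eval_Nil_eq blength_sp_id)
next
  case (Cons a u)
  then have a: "a < n" and u: "is_word n u" by (auto simp: is_word_def)
  show ?case
    using blength_gen_mult[OF word_eval_in_signed_perms[OF u] a] Cons.IH[OF u]
    by (simp add: word_eval_Cons_eq split: if_splits)
qed

lemma increasing_on_interval_eq_shift:
  fixes f :: "nat \<Rightarrow> int"
  assumes inc: "\<And>i. l \<le> i \<Longrightarrow> i < r \<Longrightarrow> f i < f (Suc i)"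
    and bounds: "\<And>i. i \<in> {l..r} \<Longrightarrow> int l + c \<le> f i \<and> f i \<le> int r + c"
    and i: "i \<in> {l..r}"
  shows "f i = int i + c"
proof -
  have lower: "int (l + d) + c \<le> f (l + d)" if "l + d \<le> r" for d
    using that
  proof (induction d)
    case 0
    then show ?case using bounds[of l] by simp
  next
    case (Suc d)
    then show ?case using inc[of "l + d"] by force
  qed
  have upper: "f (r - d) \<le> int (r - d) + c" if "d \<le> r - l" for d
    using that
  proof (induction d)
    case 0
    then show ?case using bounds[of r] i by simp
  next
    case (Suc d)
    then have "f (r - Suc d) < f (Suc (r - Suc d))" by (intro inc) auto
    moreover have "Suc (r - Suc d) = r - d" using Suc.prems by simp
    ultimately show ?case using Suc by force
  qed
  show ?thesis using lower[of "i - l"] upper[of "r - i"] i by auto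
qed

lemma no_left_descent_zero:
  assumes w: "w \<in> signed_perms n" and "\<not> left_descent n 0 w"
    and p: "p \<in> {1..n}" "\<bar>w p\<bar> = 1"
  shows "w p = 1"
  using assms left_descent_zero_iff[OF w p] by auto

lemma no_left_descent_step:
  assumes w: "w \<in> signed_perms n" and a: "1 \<le> a" and "\<not> left_descent n a w"
    and p: "p \<in> {1..n}" "w p = int a" and q: "q \<in> {1..n}" "\<bar>w q\<bar> = int a + 1"
  shows "w q = int a + 1 \<and> p < q"
proof -
  have "p \<noteq> q" using p q by auto
  then show ?thesis using assms left_descent_iff[OF w a p(1) _ q] by (auto split: if_splits)
qed

text \<open>Without left descents, the value \<open>\<plusminus>v\<close> is \<open>+v\<close> and sits to the right of \<open>v - 1\<close>,
  for \<open>v = 1, 2, \<dots>\<close> in turn.\<close>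

lemma no_left_descent_imp_sp_id:
  assumes w: "w \<in> signed_perms n" and nd: "\<forall>a<n. \<not> left_descent n a w"
  shows "w = sp_id"
proof -
  define pos where "pos v = (SOME p. p \<in> {1..n} \<and> \<bar>w p\<bar> = int v)" for v
  have pos: "pos v \<in> {1..n} \<and> \<bar>w (pos v)\<bar> = int v" if "v \<in> {1..n}" for v
    unfolding pos_def by (rule someI_ex) (meson signed_perms_abs_surj[OF w that])
  have val: "w (pos v) = int v" if "v \<in> {1..n}" for v
    using that
  proof (induction v)
    case 0
    then show ?case by simp
  next
    case (Suc v)
    show ?case
    proof (cases v)
      case 0
      then show ?thesis using no_left_descent_zero[OF w, of "pos 1"] pos[of 1] nd Suc.prems by simp
    next
      case (Suc m)
      then have "v \<in> {1..n}" "1 \<le> v" using Suc.prems by auto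
      then show ?thesis
        using no_left_descent_step[OF w, of v "pos v" "pos (Suc v)"] Suc.IH pos[of v] pos[of "Suc v"]
          nd Suc.prems by simp
    qed
  qed
  have inc: "int (pos v) < int (pos (Suc v))" if "1 \<le> v" "v < n" for v
    using no_left_descent_step[OF w, of v "pos v" "pos (Suc v)"] val[of v] pos[of v] pos[of "Suc v"]
      nd that by simp
  have "int (pos v) = int v + 0" if "v \<in> {1..n}" for v
  proof (rule increasing_on_interval_eq_shift[where f="\<lambda>v. int (pos v)", OF inc _ that])
    fix i :: nat assume "i \<in> {1..n}"
    then show "int 1 + 0 \<le> int (pos i) \<and> int (pos i) \<le> int n + 0" using pos[of i] by auto
  qed auto
  then show ?thesis
    using val signed_perms_outside[OF w] by (auto simp: sp_id_def fun_eq_iff)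
qed

lemma exists_word_of_blength:
  assumes "w \<in> signed_perms n"
  shows "\<exists>u. is_word n u \<and> word_eval u = w \<and> length u = blength n w"
  using assms
proof (induction "blength n w" arbitrary: w rule: less_induct)
  case less
  show ?case
  proof (cases "w = sp_id")
    case True
    then show ?thesis by (auto simp: is_word_def word_eval_Nil_eq blength_sp_id)
  next
    case False
    then obtain a where a: "a < n" "left_descent n a w"
      using no_left_descent_imp_sp_id[OF less.prems] by blast
    have len: "Suc (blength n (gen_mult a w)) = blength n w"
      using blength_gen_mult[OF less.prems a(1)] a(2) by simp
    obtain u where "is_word n u" "word_eval u = gen_mult a w" "length u = blength n (gen_mult a w)"
      using less.hyps[OF _ gen_mult_in_signed_perms[OF less.prems a(1)]] len by auto
    then show ?thesis
      using a len by (intro exI[of _ "a # u"]) (auto simp: is_word_def word_eval_Cons_eq gen_mult_gen_mult)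
  qed
qed

lemma reduced_expr_iff:
  "reduced_expr n u w \<longleftrightarrow> is_word n u \<and> word_eval u = w \<and> length u = blength n w"
proof
  assume r: "reduced_expr n u w"
  then have u: "is_word n u" "word_eval u = w" by (auto simp: reduced_expr_def)
  obtain v where "is_word n v" "word_eval v = w" "length v = blength n w"
    using exists_word_of_blength word_eval_in_signed_perms[OF u(1)] u(2) by blast
  then show "is_word n u \<and> word_eval u = w \<and> length u = blength n w"
    using r u blength_word_eval_le[OF u(1)] by (force simp: reduced_expr_def)
next
  assume "is_word n u \<and> word_eval u = w \<and> length u = blength n w"
  then show "reduced_expr n u w" using blength_word_eval_le by (fastforce simp: reduced_expr_def)
qed

lemma exists_reduced_expr: "w \<in> signed_perms n \<Longrightarrow> \<exists>u. reduced_expr n u w"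
  using exists_word_of_blength reduced_expr_iff by blast

lemma reduced_expr_Cons_iff:
  "reduced_expr n (a # u) w \<longleftrightarrow>
    w \<in> signed_perms n \<and> a < n \<and> left_descent n a w \<and> reduced_expr n u (gen_mult a w)"
proof
  assume r: "reduced_expr n (a # u) w"
  then have a: "a < n" and u: "is_word n u" and eq: "word_eval u = gen_mult a w"
    and len: "Suc (length u) = blength n w"
    by (auto simp: reduced_expr_iff is_word_def word_eval_Cons_eq gen_mult_gen_mult)
  have w: "w \<in> signed_perms n" using r word_eval_in_signed_perms by (auto simp: reduced_expr_def)
  have "blength n (gen_mult a w) \<le> length u" using blength_word_eval_le[OF u] eq by simp
  then have "left_descent n a w" using len by (simp add: left_descent_def)
  then show "w \<in> signed_perms n \<and> a < n \<and> left_descent n a w \<and> reduced_expr n u (gen_mult a w)"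
    using blength_gen_mult[OF w a] w a u eq len by (simp add: reduced_expr_iff)
next
  assume h: "w \<in> signed_perms n \<and> a < n \<and> left_descent n a w \<and> reduced_expr n u (gen_mult a w)"
  then have "Suc (blength n (gen_mult a w)) = blength n w" using blength_gen_mult by metis
  then show "reduced_expr n (a # u) w"
    using h by (auto simp: reduced_expr_iff word_eval_Cons_eq gen_mult_gen_mult is_word_def)
qed

section \<open>Commutation classes\<close>

definition gens_commute :: "nat \<Rightarrow> nat \<Rightarrow> bool" where
  "gens_commute a b \<longleftrightarrow> scomp (gen a) (gen b) = scomp (gen b) (gen a)"

definition restrict_word :: "nat \<Rightarrow> nat \<Rightarrow> nat list \<Rightarrow> nat list" where
  "restrict_word c d u = filter (\<lambda>x. x = c \<or> x = d) u"

definition gen_support :: "nat \<Rightarrow> int set" where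
  "gen_support a = (if a = 0 then {1, -1} else {int a, int a + 1, - int a, - int a - 1})"

lemma gen_act_outside_support: "x \<notin> gen_support a \<Longrightarrow> gen_act a x = x"
  unfolding gen_act_def gen_support_def by (auto split: if_splits)

lemma gen_act_in_support: "x \<in> gen_support a \<Longrightarrow> gen_act a x \<in> gen_support a"
  unfolding gen_support_def by (cases "a = 0") (auto simp: gen_act_def)

lemma gen_act_commute:
  assumes far: "a + 2 \<le> b \<or> b + 2 \<le> a"
  shows "gen_act a (gen_act b x) = gen_act b (gen_act a x)"
proof -
  have disj: "gen_support a \<inter> gen_support b = {}" using far by (auto simp: gen_support_def)
  show ?thesis
  proof (cases "x \<in> gen_support a")
    case True
    then have "gen_act a x \<notin> gen_support b" "x \<notin> gen_support b"
      using gen_act_in_support disj by blast+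
    then show ?thesis by (simp add: gen_act_outside_support)
  next
    case False
    show ?thesis
    proof (cases "x \<in> gen_support b")
      case True
      then have "gen_act b x \<notin> gen_support a" using gen_act_in_support disj by blast
      then show ?thesis using False by (simp add: gen_act_outside_support)
    qed (simp add: False gen_act_outside_support)
  qed
qed

lemma gen_mult_commute:
  "a + 2 \<le> b \<or> b + 2 \<le> a \<Longrightarrow> gen_mult a (gen_mult b w) = gen_mult b (gen_mult a w)"
  by (rule ext) (simp add: gen_mult_apply gen_act_commute[of a b])

lemma gens_commute_far: "a + 2 \<le> b \<or> b + 2 \<le> a \<Longrightarrow> gens_commute a b"
  unfolding gens_commute_def
  by (rule ext) (simp add: scomp_def sapp_gen gen_eq_gen_act gen_act_commute[of a b])

lemma not_gens_commute_Suc: "\<not> gens_commute k (Suc k)"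
proof
  assume "gens_commute k (Suc k)"
  then have "scomp (gen k) (gen (Suc k)) (max k 1) = scomp (gen (Suc k)) (gen k) (max k 1)"
    by (simp add: gens_commute_def)
  then show False by (cases k) (simp_all add: scomp_def sapp_gen gen_eq_gen_act gen_act_def)
qed

lemma comm_step_restrict_word:
  assumes "comm_step u v" "\<not> gens_commute c d"
  shows "restrict_word c d u = restrict_word c d v"
proof -
  obtain p q a b where uv: "u = p @ [a, b] @ q" "v = p @ [b, a] @ q" "a \<noteq> b" "gens_commute a b"
    using assms(1) by (auto simp: comm_step_def gens_commute_def)
  then have "\<not> ((a = c \<or> a = d) \<and> (b = c \<or> b = d))"
    using assms(2) by (auto simp: gens_commute_def)
  then show ?thesis using uv by (auto simp: restrict_word_def)
qed

lemma rtranclp_comm_step_restrict_word: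
  "comm_step\<^sup>*\<^sup>* u v \<Longrightarrow> \<not> gens_commute c d \<Longrightarrow> restrict_word c d u = restrict_word c d v"
  by (induction rule: rtranclp_induct) (auto dest: comm_step_restrict_word)

lemma rtranclp_comm_step_Cons: "comm_step\<^sup>*\<^sup>* u v \<Longrightarrow> comm_step\<^sup>*\<^sup>* (x # u) (x # v)"
proof (induction rule: rtranclp_induct)
  case (step y z)
  have "comm_step (x # y) (x # z)"
    using step(2) unfolding comm_step_def by (metis append_Cons)
  then show ?case using step(3) by simp
qed simp

lemma symp_comm_step: "symp comm_step"
  unfolding comm_step_def by (rule sympI) metis

definition reduced_words_disagree :: "nat \<Rightarrow> (nat \<Rightarrow> int) \<Rightarrow> bool" where
  "reduced_words_disagree n w \<longleftrightarrow> (\<exists>u v c d. reduced_expr n u w \<and> reduced_expr n v w \<and>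
     \<not> gens_commute c d \<and> restrict_word c d u \<noteq> restrict_word c d v)"

lemma reduced_words_disagree_not_FC: "reduced_words_disagree n w \<Longrightarrow> w \<notin> FC n"
  unfolding reduced_words_disagree_def FC_def using rtranclp_comm_step_restrict_word by blast

lemma reduced_words_disagree_of_descents:
  assumes w: "w \<in> signed_perms n" and ab: "a < n" "b < n" "left_descent n a w" "left_descent n b w"
    and nc: "\<not> gens_commute a b"
  shows "reduced_words_disagree n w"
proof -
  obtain u v where "reduced_expr n u (gen_mult a w)" "reduced_expr n v (gen_mult b w)"
    using exists_reduced_expr gen_mult_in_signed_perms[OF w] ab by metis
  then have "reduced_expr n (a # u) w" "reduced_expr n (b # v) w"
    using w ab by (simp_all add: reduced_expr_Cons_iff)
  moreover have "a \<noteq> b" using nc by (auto simp: gens_commute_def)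
  then have "restrict_word a b (a # u) \<noteq> restrict_word a b (b # v)" by (simp add: restrict_word_def)
  ultimately show ?thesis using nc unfolding reduced_words_disagree_def by blast
qed

lemma reduced_words_disagree_gen_mult:
  assumes w: "w \<in> signed_perms n" and a: "a < n" "left_descent n a w"
    and "reduced_words_disagree n (gen_mult a w)"
  shows "reduced_words_disagree n w"
proof -
  obtain u v c d where uv: "reduced_expr n u (gen_mult a w)" "reduced_expr n v (gen_mult a w)"
    and cd: "\<not> gens_commute c d" "restrict_word c d u \<noteq> restrict_word c d v"
    using assms(4) by (auto simp: reduced_words_disagree_def)
  have "restrict_word c d (a # u) \<noteq> restrict_word c d (a # v)" using cd(2) by (auto simp: restrict_word_def)
  then show ?thesis unfolding reduced_words_disagree_def
    using uv cd(1) w a by (metis reduced_expr_Cons_iff)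
qed

lemma reduced_exprs_far_descents:
  assumes w: "w \<in> signed_perms n" and ab: "a < n" "b < n" and far: "a + 2 \<le> b \<or> b + 2 \<le> a"
    and da: "left_descent n a (gen_mult b w)" and db: "left_descent n b (gen_mult a w)"
  obtains r where "reduced_expr n (b # r) (gen_mult a w)" "reduced_expr n (a # r) (gen_mult b w)"
proof -
  have sa: "gen_mult a w \<in> signed_perms n" and sb: "gen_mult b w \<in> signed_perms n"
    using gen_mult_in_signed_perms[OF w] ab by blast+
  obtain r where "reduced_expr n r (gen_mult b (gen_mult a w))"
    using exists_reduced_expr gen_mult_in_signed_perms[OF sa ab(2)] by blast
  then show ?thesis
    using that sa sb ab da db gen_mult_commute[OF far] by (simp add: reduced_expr_Cons_iff)
qed

text \<open>Two reduced words of \<open>w\<close> either start with the same letter, or with commuting letters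
  \<open>a\<close>, \<open>b\<close>; in the latter case they are equivalent to \<open>a b r\<close> and \<open>b a r\<close> for a common \<open>r\<close>.\<close>

lemma FC_of_descents:
  assumes w: "w \<in> signed_perms n"
    and sub: "\<forall>a<n. left_descent n a w \<longrightarrow> gen_mult a w \<in> FC n"
    and pair: "\<forall>a<n. \<forall>b<n. left_descent n a w \<and> left_descent n b w \<and> a \<noteq> b \<longrightarrow>
      (a + 2 \<le> b \<or> b + 2 \<le> a) \<and> left_descent n b (gen_mult a w)"
  shows "w \<in> FC n"
  unfolding FC_def
proof (intro CollectI conjI allI impI, fact w)
  fix u v assume uv: "reduced_expr n u w \<and> reduced_expr n v w"
  then have "length u = length v" by (simp add: reduced_expr_iff)
  then consider "u = [] \<and> v = []" | a u' b v' where "u = a # u'" "v = b # v'"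
    by (cases u; cases v) auto
  then show "comm_step\<^sup>*\<^sup>* u v"
  proof cases
    case (2 a u' b v')
    have A: "a < n" "left_descent n a w" "reduced_expr n u' (gen_mult a w)"
      and B: "b < n" "left_descent n b w" "reduced_expr n v' (gen_mult b w)"
      using uv 2 by (simp_all add: reduced_expr_Cons_iff)
    have FCa: "gen_mult a w \<in> FC n" and FCb: "gen_mult b w \<in> FC n" using sub A B by blast+
    show ?thesis
    proof (cases "a = b")
      case True
      then show ?thesis using FCa A(3) B(3) 2 rtranclp_comm_step_Cons by (auto simp: FC_def)
    next
      case False
      have far: "a + 2 \<le> b \<or> b + 2 \<le> a"
        and da: "left_descent n a (gen_mult b w)" and db: "left_descent n b (gen_mult a w)"
        using pair A B False by blast+
      obtain r where "reduced_expr n (b # r) (gen_mult a w)" "reduced_expr n (a # r) (gen_mult b w)"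
        using reduced_exprs_far_descents[OF w A(1) B(1) far da db] .
      then have c1: "comm_step\<^sup>*\<^sup>* u' (b # r)" and c2: "comm_step\<^sup>*\<^sup>* v' (a # r)"
        using FCa FCb A(3) B(3) by (auto simp: FC_def)
      have swap: "comm_step (a # b # r) (b # a # r)"
        unfolding comm_step_def using False gens_commute_far[OF far]
        by (intro exI[of _ "[]"] exI[of _ r] exI[of _ a] exI[of _ b]) (simp add: gens_commute_def)
      have "comm_step\<^sup>*\<^sup>* (a # u') (a # b # r)" using rtranclp_comm_step_Cons[OF c1] .
      also have "comm_step\<^sup>*\<^sup>* \<dots> (b # a # r)" using swap by simp
      also have "comm_step\<^sup>*\<^sup>* \<dots> (b # v')"
        using rtranclp_comm_step_Cons[OF sympD[OF symp_rtranclp[OF symp_comm_step] c2]] .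
      finally show ?thesis using 2 by simp
    qed
  qed simp
qed

lemma sp_id_in_FC: "sp_id \<in> FC n"
  by (rule FC_of_descents) (auto simp: sp_id_in_signed_perms left_descent_def blength_sp_id)

section \<open>Signed permutations with negative ends and increasing positive middle\<close>

definition increasing_middle :: "nat \<Rightarrow> (nat \<Rightarrow> int) \<Rightarrow> bool" where
  "increasing_middle n w \<longleftrightarrow> (\<forall>i. 2 \<le> i \<and> i \<le> n - 1 \<longrightarrow> 0 < w i) \<and>
     (\<forall>i. 2 \<le> i \<and> i + 1 \<le> n - 1 \<longrightarrow> w i < w (i + 1))"

definition neg_ends_shape :: "nat \<Rightarrow> (nat \<Rightarrow> int) \<Rightarrow> nat \<Rightarrow> nat \<Rightarrow> bool" where
  "neg_ends_shape n w a b \<longleftrightarrow>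
     w \<in> signed_perms n \<and> w 1 = - int a \<and> w n = - int b \<and> increasing_middle n w"

lemma value_in_middle:
  assumes n: "3 \<le> n" and w: "w \<in> signed_perms n" and m: "increasing_middle n w" and v: "v \<in> {1..n}"
    and ends: "\<bar>w 1\<bar> \<noteq> int v" "\<bar>w n\<bar> \<noteq> int v"
  obtains p where "2 \<le> p" "p \<le> n - 1" "w p = int v"
proof -
  obtain p where p: "p \<in> {1..n}" "\<bar>w p\<bar> = int v" using signed_perms_abs_surj[OF w v] by blast
  then have "2 \<le> p" "p \<le> n - 1" using ends by (cases "p = 1 \<or> p = n"; force)+
  moreover from this have "0 < w p" using m by (simp add: increasing_middle_def)
  ultimately show ?thesis using that p by simp
qed

lemma increasing_middle_gen_mult:
  assumes m: "increasing_middle n w" and k: "1 \<le> k"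
    and avoid: "\<And>i. 2 \<le> i \<Longrightarrow> i \<le> n - 1 \<Longrightarrow> w i \<noteq> int k + 1"
  shows "increasing_middle n (gen_mult k w)"
  unfolding increasing_middle_def
proof (intro conjI allI impI)
  fix i assume "2 \<le> i \<and> i \<le> n - 1"
  then show "0 < gen_mult k w i" using m k by (auto simp: increasing_middle_def gen_mult_apply gen_act_def)
next
  fix i assume i: "2 \<le> i \<and> i + 1 \<le> n - 1"
  then have "0 < w i" "0 < w (i + 1)" "w i < w (i + 1)" using m by (simp_all add: increasing_middle_def)
  moreover have "\<not> ((\<bar>w (i + 1)\<bar> = int k \<and> \<bar>w i\<bar> = int k + 1) \<or> (\<bar>w (i + 1)\<bar> = int k + 1 \<and> \<bar>w i\<bar> = int k))"
    using avoid[of i] avoid[of "i + 1"] i calculation by auto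
  ultimately show "gen_mult k w i < gen_mult k w (i + 1)"
    using gen_act_preserves_order[OF k] by (simp add: gen_mult_apply)
qed

lemma neg_end_gen_mult:
  assumes n: "3 \<le> n" and w: "w \<in> signed_perms n" and m: "increasing_middle n w"
    and e: "e = 1 \<or> e = n" and we: "w e = - int c" and c: "2 \<le> c"
    and ends: "\<bar>w 1\<bar> \<noteq> int c - 1" "\<bar>w n\<bar> \<noteq> int c - 1"
  shows "left_descent n (c - 1) w" and "increasing_middle n (gen_mult (c - 1) w)"
    and "gen_mult (c - 1) w e = - int (c - 1)"
    and "\<forall>e'. (e' = 1 \<or> e' = n) \<and> e' \<noteq> e \<longrightarrow> gen_mult (c - 1) w e' = w e'"
proof -
  have e_mem: "e \<in> {1..n}" using e n by auto
  have cn: "c \<le> n" using signed_perms_abs_le[OF w e_mem] we by simp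
  obtain p where p: "2 \<le> p" "p \<le> n - 1" "w p = int (c - 1)"
    using value_in_middle[OF n w m, of "c - 1"] ends c cn by force
  have p_mem: "p \<in> {1..n}" using p by auto
  show "left_descent n (c - 1) w"
    using left_descent_iff[OF w _ p_mem _ e_mem] p we c by simp
  have not_c: "w i \<noteq> int (c - 1) + 1" if "2 \<le> i" "i \<le> n - 1" for i
  proof
    assume "w i = int (c - 1) + 1"
    then have "\<bar>w i\<bar> = \<bar>w e\<bar>" using we c by simp
    then show False using signed_perms_abs_eq_iff[OF w _ e_mem, of i] that e n by auto
  qed
  show "increasing_middle n (gen_mult (c - 1) w)"
    by (rule increasing_middle_gen_mult[OF m _ not_c]) (use c in simp)
  show "gen_mult (c - 1) w e = - int (c - 1)"
    using we c by (simp add: gen_mult_apply gen_act_def)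
  show "\<forall>e'. (e' = 1 \<or> e' = n) \<and> e' \<noteq> e \<longrightarrow> gen_mult (c - 1) w e' = w e'"
  proof (intro allI impI)
    fix e' assume e': "(e' = 1 \<or> e' = n) \<and> e' \<noteq> e"
    then have "\<bar>w e'\<bar> \<noteq> \<bar>w e\<bar>" using signed_perms_abs_eq_iff[OF w _ e_mem, of e'] n by auto
    then show "gen_mult (c - 1) w e' = w e'"
      using e' ends we c by (auto simp: gen_mult_apply gen_act_def)
  qed
qed

lemma neg_ends_shape_bounds:
  assumes n: "3 \<le> n" and "neg_ends_shape n w a b"
  shows "1 \<le> a" "a \<le> n" "1 \<le> b" "b \<le> n" "a \<noteq> b"
proof -
  have w: "w \<in> signed_perms n" and w1: "w 1 = - int a" and wn: "w n = - int b"
    using assms(2) by (auto simp: neg_ends_shape_def)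
  have ends: "1 \<in> {1..n}" "n \<in> {1..n}" using n by auto
  show "1 \<le> a" "a \<le> n" "1 \<le> b" "b \<le> n"
    using signed_perms_nonzero[OF w] signed_perms_abs_le[OF w] ends w1 wn by force+
  show "a \<noteq> b" using signed_perms_abs_eq_iff[OF w ends] w1 wn n by auto
qed

lemma neg_ends_shape_lower_first:
  assumes n: "3 \<le> n" and s: "neg_ends_shape n w a b" and a: "2 \<le> a" "a - 1 \<noteq> b"
  shows "left_descent n (a - 1) w \<and> neg_ends_shape n (gen_mult (a - 1) w) (a - 1) b"
proof -
  have w: "w \<in> signed_perms n" and w1: "w 1 = - int a" and wn: "w n = - int b"
    and m: "increasing_middle n w" using s by (auto simp: neg_ends_shape_def)
  note step = neg_end_gen_mult[OF n w m disjI1[OF refl] w1 a(1)]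
  have "\<bar>w 1\<bar> \<noteq> int a - 1" "\<bar>w n\<bar> \<noteq> int a - 1" using w1 wn a by auto
  then show ?thesis
    using step gen_mult_in_signed_perms[OF w] neg_ends_shape_bounds[OF n s] wn a
    by (auto simp: neg_ends_shape_def)
qed

lemma neg_ends_shape_lower_last:
  assumes n: "3 \<le> n" and s: "neg_ends_shape n w a b" and b: "2 \<le> b" "b - 1 \<noteq> a"
  shows "left_descent n (b - 1) w \<and> neg_ends_shape n (gen_mult (b - 1) w) a (b - 1)"
proof -
  have w: "w \<in> signed_perms n" and w1: "w 1 = - int a" and wn: "w n = - int b"
    and m: "increasing_middle n w" using s by (auto simp: neg_ends_shape_def)
  note step = neg_end_gen_mult[OF n w m disjI2[OF refl] wn b(1)]
  have "\<bar>w 1\<bar> \<noteq> int b - 1" "\<bar>w n\<bar> \<noteq> int b - 1" using w1 wn b by auto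
  then show ?thesis
    using step gen_mult_in_signed_perms[OF w] neg_ends_shape_bounds[OF n s] w1 b
    by (auto simp: neg_ends_shape_def)
qed

lemma neg_ends_shape_1_2_disagree:
  assumes n: "3 \<le> n" and s: "neg_ends_shape n w 1 2"
  shows "reduced_words_disagree n w"
proof -
  have w: "w \<in> signed_perms n" and w1: "w 1 = -1" and wn: "w n = -2"
    using s by (auto simp: neg_ends_shape_def)
  have ends: "1 \<in> {1..n}" "n \<in> {1..n}" using n by auto
  have "left_descent n 0 w" using left_descent_zero_iff[OF w ends(1)] w1 by simp
  moreover have "left_descent n 1 w" using left_descent_iff[OF w _ ends(1) _ ends(2)] w1 wn n by simp
  ultimately show ?thesis
    using reduced_words_disagree_of_descents[OF w _ _ _ _ not_gens_commute_Suc[of 0]] n by simp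
qed

lemma neg_ends_shape_3_1_disagree:
  assumes n: "3 \<le> n" and s: "neg_ends_shape n w 3 1"
  shows "reduced_words_disagree n w"
proof -
  have w: "w \<in> signed_perms n" and w1: "w 1 = -3" and wn: "w n = -1"
    and m: "increasing_middle n w" using s by (auto simp: neg_ends_shape_def)
  have ends: "1 \<in> {1..n}" "n \<in> {1..n}" using n by auto
  obtain p where p: "2 \<le> p" "p \<le> n - 1" "w p = 2"
    using value_in_middle[OF n w m, of 2] w1 wn n by force
  have p_mem: "p \<in> {1..n}" using p by auto
  define w' where "w' = gen_mult 0 w"
  have w': "w' \<in> signed_perms n" using gen_mult_in_signed_perms[OF w] n by (simp add: w'_def)
  have vals: "w' 1 = -3" "w' n = 1" "w' p = 2"
    using w1 wn p by (simp_all add: w'_def gen_mult_apply gen_act_def)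
  have "left_descent n 1 w'" using left_descent_iff[OF w' _ ends(2) _ p_mem] vals p by simp
  moreover have "left_descent n 2 w'" using left_descent_iff[OF w' _ p_mem _ ends(1)] vals by simp
  ultimately have "reduced_words_disagree n w'"
    using reduced_words_disagree_of_descents[OF w' _ _ _ _ not_gens_commute_Suc[of 1]] n
    by (simp add: numeral_2_eq_2)
  moreover have "left_descent n 0 w" using left_descent_zero_iff[OF w ends(2)] wn by simp
  ultimately show ?thesis using reduced_words_disagree_gen_mult[OF w, of 0] n by (simp add: w'_def)
qed

text \<open>Lower the end values one at a time, steering towards \<open>(1, 2)\<close> or \<open>(3, 1)\<close>;
  the only shape that cannot be steered there is \<open>(2, 1)\<close>.\<close>

lemma neg_ends_shape_disagree:
  assumes n: "3 \<le> n"
  shows "neg_ends_shape n w a b \<Longrightarrow> (a, b) \<noteq> (2, 1) \<Longrightarrow> reduced_words_disagree n w"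
proof (induction "a + b" arbitrary: w a b rule: less_induct)
  case less
  have w: "w \<in> signed_perms n" using less.prems(1) by (simp add: neg_ends_shape_def)
  note bounds = neg_ends_shape_bounds[OF n less.prems(1)]
  consider "(a, b) = (1, 2)" | "(a, b) = (3, 1)"
    | "2 \<le> b \<and> b - 1 \<noteq> a \<and> (a, b - 1) \<noteq> (2, 1)"
    | "2 \<le> a \<and> a - 1 \<noteq> b \<and> (a - 1, b) \<noteq> (2, 1)"
    using bounds less.prems(2) by fastforce
  then show ?case
  proof cases
    case 1
    then show ?thesis using neg_ends_shape_1_2_disagree[OF n] less.prems(1) by simp
  next
    case 2
    then show ?thesis using neg_ends_shape_3_1_disagree[OF n] less.prems(1) by simp
  next
    case 3
    then have "left_descent n (b - 1) w" "reduced_words_disagree n (gen_mult (b - 1) w)"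
      using neg_ends_shape_lower_last[OF n less.prems(1)] less.hyps[of a "b - 1"] by auto
    then show ?thesis using reduced_words_disagree_gen_mult[OF w, of "b - 1"] bounds by simp
  next
    case 4
    then have "left_descent n (a - 1) w" "reduced_words_disagree n (gen_mult (a - 1) w)"
      using neg_ends_shape_lower_first[OF n less.prems(1)] less.hyps[of "a - 1" b] by auto
    then show ?thesis using reduced_words_disagree_gen_mult[OF w, of "a - 1"] bounds by simp
  qed
qed

lemma neg_ends_shape_FC:
  assumes "3 \<le> n" "neg_ends_shape n w a b" "w \<in> FC n"
  shows "a = 2 \<and> b = 1"
  using neg_ends_shape_disagree[OF assms(1,2)] reduced_words_disagree_not_FC assms(3) by blast

lemma neg_ends_shape_2_1_middle:
  assumes n: "3 \<le> n" and s: "neg_ends_shape n w 2 1" and i: "2 \<le> i" "i \<le> n - 1"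
  shows "w i = int i + 1"
proof -
  have w: "w \<in> signed_perms n" and w1: "w 1 = -2" and wn: "w n = -1"
    and m: "increasing_middle n w" using s by (auto simp: neg_ends_shape_def)
  have "int 2 + 1 \<le> w j \<and> w j \<le> int (n - 1) + 1" if "j \<in> {2..n - 1}" for j
  proof -
    have j: "j \<in> {1..n}" "j \<noteq> 1" "j \<noteq> n" using that n by auto
    have "\<bar>w j\<bar> \<noteq> \<bar>w 1\<bar>" "\<bar>w j\<bar> \<noteq> \<bar>w n\<bar>"
      using signed_perms_abs_eq_iff[OF w j(1)] j n by auto
    moreover have "0 < w j" using m that by (simp add: increasing_middle_def)
    ultimately show ?thesis using signed_perms_abs_le[OF w j(1)] w1 wn n by auto
  qed
  moreover have "w j < w (Suc j)" if "2 \<le> j" "j < n - 1" for j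
    using m that by (simp add: increasing_middle_def)
  ultimately show ?thesis using increasing_on_interval_eq_shift[of 2 "n - 1" w 1 i] i by simp
qed

lemma neg_ends_shape_2_1_unique:
  assumes n: "3 \<le> n" and "neg_ends_shape n w 2 1" "neg_ends_shape n w' 2 1"
  shows "w = w'"
proof
  fix i
  show "w i = w' i"
  proof (cases "2 \<le> i \<and> i \<le> n - 1")
    case True
    then show ?thesis
      using neg_ends_shape_2_1_middle[OF n assms(2), of i] neg_ends_shape_2_1_middle[OF n assms(3), of i]
      by simp
  next
    case False
    then have "i = 1 \<or> i = n \<or> i \<notin> {1..n}" by auto
    then show ?thesis
      using assms(2,3) signed_perms_outside[of w n i] signed_perms_outside[of w' n i]
      by (auto simp: neg_ends_shape_def)
  qed
qed

section \<open>Two fully commutative elements\<close>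

definition s0 :: "nat \<Rightarrow> int" where "s0 = gen_mult 0 sp_id"
definition s1s0 :: "nat \<Rightarrow> int" where "s1s0 = gen_mult 1 s0"
definition s0s1s0 :: "nat \<Rightarrow> int" where "s0s1s0 = gen_mult 0 s1s0"
definition s2s1s0 :: "nat \<Rightarrow> int" where "s2s1s0 = gen_mult 2 s1s0"
definition s0s2s1s0 :: "nat \<Rightarrow> int" where "s0s2s1s0 = gen_mult 0 s2s1s0"

lemma s0_apply: "s0 i = (if i = 1 then -1 else int i)"
  by (simp add: s0_def gen_mult_apply sp_id_def gen_act_def)

lemma s1s0_apply: "s1s0 i = (if i = 1 then -2 else if i = 2 then 1 else int i)"
  by (simp add: s1s0_def gen_mult_apply s0_apply gen_act_def)

lemma s0s1s0_apply: "s0s1s0 i = (if i = 1 then -2 else if i = 2 then -1 else int i)"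
  by (simp add: s0s1s0_def gen_mult_apply s1s0_apply gen_act_def)

lemma s2s1s0_apply: "s2s1s0 i = (if i = 1 then -3 else if i = 2 then 1 else if i = 3 then 2 else int i)"
  by (simp add: s2s1s0_def gen_mult_apply s1s0_apply gen_act_def)

lemma s0s2s1s0_apply: "s0s2s1s0 i = (if i = 1 then -3 else if i = 2 then -1 else if i = 3 then 2 else int i)"
  by (simp add: s0s2s1s0_def gen_mult_apply s2s1s0_apply gen_act_def)

lemma gen_mult_s_words:
  "gen_mult 0 s0 = sp_id" "gen_mult 1 s1s0 = s0" "gen_mult 0 s0s1s0 = s1s0"
  "gen_mult 2 s2s1s0 = s1s0" "gen_mult 0 s0s2s1s0 = s2s1s0" "gen_mult 2 s0s2s1s0 = s0s1s0"
  by (simp_all add: s0_def s1s0_def s0s1s0_def s2s1s0_def s0s2s1s0_def gen_mult_gen_mult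
    gen_mult_commute[of 2 0])

lemma no_left_descent_fixed:
  assumes "w \<in> signed_perms n" "1 \<le> a" "a < n" "w a = int a" "w (a + 1) = int a + 1"
  shows "\<not> left_descent n a w"
  using left_descent_iff[OF assms(1,2), of a "a + 1"] assms by auto

context
  fixes n :: nat
  assumes n: "3 \<le> n"
begin

lemma s_words_in_signed_perms:
  "s0 \<in> signed_perms n" "s1s0 \<in> signed_perms n" "s0s1s0 \<in> signed_perms n"
  "s2s1s0 \<in> signed_perms n" "s0s2s1s0 \<in> signed_perms n"
  using n by (simp_all add: s0_def s1s0_def s0s1s0_def s2s1s0_def s0s2s1s0_def
    gen_mult_in_signed_perms sp_id_in_signed_perms)

lemma left_descent_s0: "a < n \<Longrightarrow> left_descent n a s0 \<longleftrightarrow> a = 0"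
  using left_descent_zero_iff[OF s_words_in_signed_perms(1), of 1]
    left_descent_iff[OF s_words_in_signed_perms(1), of 1 1 2]
    no_left_descent_fixed[OF s_words_in_signed_perms(1), of a] n
  by (cases "a \<le> 1") (auto simp: s0_apply le_Suc_eq)

lemma left_descent_s1s0: "a < n \<Longrightarrow> left_descent n a s1s0 \<longleftrightarrow> a = 1"
  using left_descent_zero_iff[OF s_words_in_signed_perms(2), of 2]
    left_descent_iff[OF s_words_in_signed_perms(2), of 1 2 1]
    left_descent_iff[OF s_words_in_signed_perms(2), of 2 1 3]
    no_left_descent_fixed[OF s_words_in_signed_perms(2), of a] n
  by (cases "a \<le> 2") (auto simp: s1s0_apply le_Suc_eq numeral_2_eq_2)

lemma left_descent_s0s1s0: "a < n \<Longrightarrow> left_descent n a s0s1s0 \<longleftrightarrow> a = 0"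
  using left_descent_zero_iff[OF s_words_in_signed_perms(3), of 2]
    left_descent_iff[OF s_words_in_signed_perms(3), of 1 2 1]
    left_descent_iff[OF s_words_in_signed_perms(3), of 2 1 3]
    no_left_descent_fixed[OF s_words_in_signed_perms(3), of a] n
  by (cases "a \<le> 2") (auto simp: s0s1s0_apply le_Suc_eq numeral_2_eq_2)

lemma left_descent_s2s1s0: "a < n \<Longrightarrow> left_descent n a s2s1s0 \<longleftrightarrow> a = 2"
  using left_descent_zero_iff[OF s_words_in_signed_perms(4), of 2]
    left_descent_iff[OF s_words_in_signed_perms(4), of 1 2 3]
    left_descent_iff[OF s_words_in_signed_perms(4), of 2 3 1]
    left_descent_iff[OF s_words_in_signed_perms(4), of 3 1 4]
    no_left_descent_fixed[OF s_words_in_signed_perms(4), of a] n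
  by (cases "a \<le> 3") (auto simp: s2s1s0_apply le_Suc_eq numeral_2_eq_2 numeral_3_eq_3)

lemma left_descent_s0s2s1s0: "a < n \<Longrightarrow> left_descent n a s0s2s1s0 \<longleftrightarrow> a = 0 \<or> a = 2"
  using left_descent_zero_iff[OF s_words_in_signed_perms(5), of 2]
    left_descent_iff[OF s_words_in_signed_perms(5), of 1 2 3]
    left_descent_iff[OF s_words_in_signed_perms(5), of 2 3 1]
    left_descent_iff[OF s_words_in_signed_perms(5), of 3 1 4]
    no_left_descent_fixed[OF s_words_in_signed_perms(5), of a] n
  by (cases "a \<le> 3") (auto simp: s0s2s1s0_apply le_Suc_eq numeral_2_eq_2 numeral_3_eq_3)

lemma s0s1s0_in_FC: "s0s1s0 \<in> FC n" and s0s2s1s0_in_FC: "s0s2s1s0 \<in> FC n"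
proof -
  have s0: "s0 \<in> FC n"
    by (rule FC_of_descents) (use s_words_in_signed_perms left_descent_s0 gen_mult_s_words sp_id_in_FC in auto)
  have s1s0: "s1s0 \<in> FC n"
    by (rule FC_of_descents) (use s_words_in_signed_perms left_descent_s1s0 gen_mult_s_words s0 in auto)
  show s0s1s0: "s0s1s0 \<in> FC n"
    by (rule FC_of_descents) (use s_words_in_signed_perms left_descent_s0s1s0 gen_mult_s_words s1s0 in auto)
  have s2s1s0: "s2s1s0 \<in> FC n"
    by (rule FC_of_descents) (use s_words_in_signed_perms left_descent_s2s1s0 gen_mult_s_words s1s0 in auto)
  have "left_descent n 2 (gen_mult 0 s0s2s1s0)" "left_descent n 0 (gen_mult 2 s0s2s1s0)"
    using left_descent_s2s1s0 left_descent_s0s1s0 gen_mult_s_words n by auto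
  then show "s0s2s1s0 \<in> FC n"
    by (intro FC_of_descents) (use s_words_in_signed_perms left_descent_s0s2s1s0 gen_mult_s_words
      s0s1s0 s2s1s0 in auto)
qed

end

section \<open>Coefficients of Poirier's functions\<close>

definition poirier_fillings :: "nat \<Rightarrow> (nat \<Rightarrow> int) \<Rightarrow> (nat \<Rightarrow> nat) \<Rightarrow> (nat \<Rightarrow> nat) \<Rightarrow> (nat \<Rightarrow> nat) set" where
  "poirier_fillings n w \<alpha> \<beta> = {ix :: nat \<Rightarrow> nat.
      (\<forall>j. j \<notin> {1..n} \<longrightarrow> ix j = 0) \<and> (\<forall>j\<in>{1..n}. 1 \<le> ix j)
    \<and> (\<forall>j. 1 \<le> j \<and> j < n \<longrightarrow> ix j \<le> ix (j+1))
    \<and> (\<forall>j\<in>rDes n w. ix j < ix (j+1))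
    \<and> (\<forall>k. \<alpha> k = card {j \<in> {1..n}. j \<notin> Neg n w \<and> ix j = k})
    \<and> (\<forall>k. \<beta> k = card {j \<in> {1..n}. j \<in> Neg n w \<and> ix j = k})}"

definition single_exp :: "nat \<Rightarrow> nat \<Rightarrow> nat \<Rightarrow> nat" where
  "single_exp k m = (\<lambda>i. if i = k then m else 0)"

definition exp_1_2 :: "nat \<Rightarrow> nat" where
  "exp_1_2 = (\<lambda>i. if i = 1 \<or> i = 2 then 1 else 0)"

lemma card_eq_1_imp_eq: "card S = 1 \<Longrightarrow> x \<in> S \<Longrightarrow> y \<in> S \<Longrightarrow> x = y"
  by (metis card_1_singletonE singletonD)

lemma poirier_coeff_eq_card: "poirier_coeff n w \<alpha> \<beta> = card (poirier_fillings n w \<alpha> \<beta>)"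
  by (simp add: poirier_coeff_def poirier_fillings_def)

lemma poirier_filling_exp_pos:
  assumes ix: "ix \<in> poirier_fillings n w \<alpha> \<beta>" and j: "j \<in> {1..n}"
  shows "j \<notin> Neg n w \<Longrightarrow> 1 \<le> \<alpha> (ix j)" and "j \<in> Neg n w \<Longrightarrow> 1 \<le> \<beta> (ix j)"
proof -
  have "\<alpha> (ix j) = card {j' \<in> {1..n}. j' \<notin> Neg n w \<and> ix j' = ix j}"
    and "\<beta> (ix j) = card {j' \<in> {1..n}. j' \<in> Neg n w \<and> ix j' = ix j}"
    using ix by (auto simp: poirier_fillings_def)
  then show "j \<notin> Neg n w \<Longrightarrow> 1 \<le> \<alpha> (ix j)" and "j \<in> Neg n w \<Longrightarrow> 1 \<le> \<beta> (ix j)"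
    using j by (auto simp: Suc_le_eq card_gt_0_iff)
qed

lemma finite_poirier_fillings:
  assumes "\<forall>k>m. \<alpha> k = 0 \<and> \<beta> k = 0"
  shows "finite (poirier_fillings n w \<alpha> \<beta>)"
proof (rule finite_subset)
  show "poirier_fillings n w \<alpha> \<beta> \<subseteq> {f. \<forall>x. (x \<in> {1..n} \<longrightarrow> f x \<in> {..m}) \<and> (x \<notin> {1..n} \<longrightarrow> f x = 0)}"
  proof (intro subsetI CollectI allI conjI impI)
    fix ix x assume ix: "ix \<in> poirier_fillings n w \<alpha> \<beta>"
    show "x \<in> {1..n} \<Longrightarrow> ix x \<in> {..m}"
      using poirier_filling_exp_pos[OF ix] assms by (cases "x \<in> Neg n w") (force simp: not_le[symmetric])+
    show "x \<notin> {1..n} \<Longrightarrow> ix x = 0" using ix by (simp add: poirier_fillings_def)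
  qed
qed (rule finite_set_of_finite_funs; simp)

lemma poirier_filling_mono:
  assumes ix: "ix \<in> poirier_fillings n w \<alpha> \<beta>" and "1 \<le> i" "i \<le> k" "k \<le> n"
  shows "ix i \<le> ix k"
  using assms(3,4)
proof (induction k)
  case (Suc k)
  show ?case
  proof (cases "i = Suc k")
    case False
    then have "ix i \<le> ix k" "1 \<le> k" using Suc assms(2) by auto
    moreover have "ix k \<le> ix (k + 1)" using ix \<open>1 \<le> k\<close> Suc.prems by (simp add: poirier_fillings_def)
    ultimately show ?thesis by simp
  qed simp
qed simp

lemma poirier_filling_x1_y1y2:
  assumes n: "3 \<le> n" and ix: "ix \<in> poirier_fillings n w (single_exp 1 (n - 2)) exp_1_2"
  shows "ix = (\<lambda>j. if 1 \<le> j \<and> j < n then 1 else if j = n then 2 else 0)"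
    and "n \<in> Neg n w" and "card {j \<in> {1..<n}. j \<in> Neg n w} = 1"
    and "\<And>j. 1 \<le> j \<Longrightarrow> j + 1 < n \<Longrightarrow> j \<notin> rDes n w"
proof -
  let ?N = "Neg n w"
  have out: "\<forall>j. j \<notin> {1..n} \<longrightarrow> ix j = 0" and des: "\<forall>j\<in>rDes n w. ix j < ix (j+1)"
    and card_neg: "\<And>k. exp_1_2 k = card {j \<in> {1..n}. j \<in> ?N \<and> ix j = k}"
    using ix by (auto simp: poirier_fillings_def)
  have pos_1: "ix j = 1" if "j \<in> {1..n}" "j \<notin> ?N" for j
    using poirier_filling_exp_pos(1)[OF ix that] that by (auto simp: single_exp_def split: if_splits)
  have neg_12: "ix j = 1 \<or> ix j = 2" if "j \<in> {1..n}" "j \<in> ?N" for j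
    using poirier_filling_exp_pos(2)[OF ix that] that by (auto simp: exp_1_2_def split: if_splits)
  have one_2: "card {j \<in> {1..n}. j \<in> ?N \<and> ix j = 2} = 1"
    and one_1: "card {j \<in> {1..n}. j \<in> ?N \<and> ix j = 1} = 1"
    using card_neg[of 1] card_neg[of 2] by (simp_all add: exp_1_2_def)
  have n_mem: "n \<in> {1..n}" using n by simp
  have ix_n: "ix n = 2"
  proof (rule ccontr)
    assume "ix n \<noteq> 2"
    then have "ix j \<le> 1" if "j \<in> {1..n}" for j
      using pos_1[OF n_mem] neg_12[OF n_mem] poirier_filling_mono[OF ix, of j n] that
      by (cases "n \<in> ?N") auto
    then have empty: "{j \<in> {1..n}. j \<in> ?N \<and> ix j = 2} = {}" by fastforce
    show False using one_2 unfolding empty by simp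
  qed
  show n_neg: "n \<in> ?N" using pos_1[OF n_mem] ix_n by auto
  have ix_below: "ix j = 1" if "1 \<le> j" "j < n" for j
  proof (rule ccontr)
    assume "ix j \<noteq> 1"
    then have "j \<in> {j \<in> {1..n}. j \<in> ?N \<and> ix j = 2}" using pos_1[of j] neg_12[of j] that by auto
    moreover have "n \<in> {j \<in> {1..n}. j \<in> ?N \<and> ix j = 2}" using n_mem n_neg ix_n by simp
    ultimately show False using card_eq_1_imp_eq[OF one_2] that by blast
  qed
  show "ix = (\<lambda>j. if 1 \<le> j \<and> j < n then 1 else if j = n then 2 else 0)"
    using ix_below ix_n out by (auto simp: fun_eq_iff)
  have "{j \<in> {1..<n}. j \<in> ?N} = {j \<in> {1..n}. j \<in> ?N \<and> ix j = 1}"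
    using ix_below ix_n by (auto simp: le_less)
  then show "card {j \<in> {1..<n}. j \<in> ?N} = 1" using one_1 by simp
  show "j \<notin> rDes n w" if "1 \<le> j" "j + 1 < n" for j
    using des ix_below[of j] ix_below[of "j + 1"] that by auto
qed

lemma neg_ends_shape_of_filling:
  assumes n: "3 \<le> n" and w: "w \<in> signed_perms n" and n_neg: "n \<in> Neg n w"
    and one_neg: "card {j \<in> {1..<n}. j \<in> Neg n w} = 1"
    and no_des: "\<And>j. 1 \<le> j \<Longrightarrow> j + 1 < n \<Longrightarrow> j \<notin> rDes n w"
  shows "neg_ends_shape n w (nat (- w 1)) (nat (- w n))"
proof -
  have no_rless: "\<not> rless (w (j + 1)) (w j)" if "1 \<le> j" "j + 1 < n" for j
    using no_des[OF that] that by (simp add: rDes_def)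
  have nz: "w j \<noteq> 0" if "1 \<le> j" "j \<le> n" for j using signed_perms_nonzero[OF w] that by simp
  have unique_neg: "i = j" if "i \<in> {1..<n}" "j \<in> {1..<n}" "w i < 0" "w j < 0" for i j
    by (rule card_eq_1_imp_eq[OF one_neg]) (use that in \<open>simp_all add: Neg_def\<close>)
  have mid_pos: "0 < w j" if "2 \<le> j" "j \<le> n - 1" for j
  proof (rule ccontr)
    assume "\<not> 0 < w j"
    then have wj: "w j < 0" using nz[of j] that n by force
    have j': "1 \<le> j - 1" "j - 1 + 1 < n" "j - 1 \<le> n" "j - 1 + 1 = j" using that n by auto
    then have "w (j - 1) < 0"
      using wj no_rless[OF j'(1,2)] nz[OF j'(1,3)] by (auto simp: rless_def)
    moreover have "j - 1 \<in> {1..<n}" "j \<in> {1..<n}" using that n by auto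
    ultimately show False using wj unique_neg[of "j - 1" j] that by auto
  qed
  have "w 1 < 0"
  proof -
    obtain j where "j \<in> {j \<in> {1..<n}. j \<in> Neg n w}" using one_neg by (metis card_1_singletonE singletonI)
    then have j: "1 \<le> j" "j \<le> n - 1" "w j < 0" by (auto simp: Neg_def)
    then have "j = 1" using mid_pos[of j] by fastforce
    then show ?thesis using j by simp
  qed
  moreover have "w n < 0" using n_neg by (simp add: Neg_def)
  moreover have "w i < w (i + 1)" if "2 \<le> i" "i + 1 \<le> n - 1" for i
  proof -
    have i: "1 \<le> i" "i + 1 < n" using that by auto
    then have "w i \<le> w (i + 1)"
      using no_rless[of i] mid_pos[of i] mid_pos[of "i + 1"] that by (auto simp: rless_def)
    moreover have "w i \<noteq> w (i + 1)"
      using signed_perms_abs_eq_iff[OF w, of i "i + 1"] i by auto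
    ultimately show ?thesis by simp
  qed
  ultimately show ?thesis using w mid_pos by (simp add: neg_ends_shape_def increasing_middle_def)
qed

lemma poirier_coeff_x1_y1y2_le_1:
  assumes "3 \<le> n"
  shows "poirier_coeff n w (single_exp 1 (n - 2)) exp_1_2 \<le> 1"
proof -
  have "poirier_fillings n w (single_exp 1 (n - 2)) exp_1_2 \<subseteq>
      {\<lambda>j. if 1 \<le> j \<and> j < n then 1 else if j = n then 2 else 0}"
    using poirier_filling_x1_y1y2(1)[OF assms] by blast
  then have "card (poirier_fillings n w (single_exp 1 (n - 2)) exp_1_2) \<le> 1"
    using card_mono[of "{_}"] by fastforce
  then show ?thesis by (simp add: poirier_coeff_eq_card)
qed

lemma poirier_coeff_x1_y1y2_neg_ends_shape:
  assumes n: "3 \<le> n" and w: "w \<in> signed_perms n"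
    and "poirier_coeff n w (single_exp 1 (n - 2)) exp_1_2 \<noteq> 0"
  shows "neg_ends_shape n w (nat (- w 1)) (nat (- w n))"
proof -
  have "poirier_fillings n w (single_exp 1 (n - 2)) exp_1_2 \<noteq> {}"
    using assms(3) by (auto simp: poirier_coeff_eq_card)
  then obtain ix where "ix \<in> poirier_fillings n w (single_exp 1 (n - 2)) exp_1_2" by blast
  from poirier_filling_x1_y1y2(2-4)[OF n this] show ?thesis by (rule neg_ends_shape_of_filling[OF n w])
qed

lemma poirier_coeff_x2_y1y2_pos:
  assumes n: "3 \<le> n" and e: "e = s0s1s0 \<or> e = s0s2s1s0"
  shows "1 \<le> poirier_coeff n e (single_exp 2 (n - 2)) exp_1_2"
proof -
  let ?ix = "\<lambda>j::nat. if j = 1 then 1 else if 2 \<le> j \<and> j \<le> n then 2 else (0::nat)"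
  have ev: "e i = (if i = 1 then (if e = s0s1s0 then -2 else -3) else if i = 2 then -1
     else if i = 3 then (if e = s0s1s0 then 3 else 2) else int i)" for i
    using e by (auto simp: s0s1s0_apply s0s2s1s0_apply)
  have N: "Neg n e = {1, 2}" using n by (auto simp: Neg_def ev)
  have "rDes n e \<subseteq> {1}" by (auto simp: rDes_def rless_def ev split: if_splits)
  moreover have "{j \<in> {1..n}. j \<notin> Neg n e \<and> ?ix j = k} = (if k = 2 then {3..n} else {})" for k
    unfolding N by auto
  moreover have "{j \<in> {1..n}. j \<in> Neg n e \<and> ?ix j = k} = (if k = 1 then {1} else if k = 2 then {2} else {})" for k
    unfolding N using n by auto
  ultimately have "?ix \<in> poirier_fillings n e (single_exp 2 (n - 2)) exp_1_2"
    using n by (auto simp: poirier_fillings_def single_exp_def exp_1_2_def)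
  moreover have "finite (poirier_fillings n e (single_exp 2 (n - 2)) exp_1_2)"
    by (rule finite_poirier_fillings[where m = 2]) (simp add: single_exp_def exp_1_2_def)
  ultimately show ?thesis by (auto simp: poirier_coeff_eq_card Suc_le_eq card_gt_0_iff)
qed

lemma finite_FC: "finite (FC n)"
  by (rule finite_subset[OF _ finite_signed_perms]) (auto simp: FC_def)

lemma QP_coeff_FC_x1_y1y2_le_1:
  assumes n: "3 \<le> n"
  shows "QP_coeff n (FC n) (single_exp 1 (n - 2)) exp_1_2 \<le> 1"
proof -
  let ?c = "\<lambda>w. poirier_coeff n w (single_exp 1 (n - 2)) exp_1_2"
  let ?S = "{w \<in> FC n. ?c w \<noteq> 0}"
  have shape: "neg_ends_shape n w 2 1" if "w \<in> ?S" for w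
  proof -
    have "w \<in> signed_perms n" using that by (simp add: FC_def)
    then have "neg_ends_shape n w (nat (- w 1)) (nat (- w n))"
      using poirier_coeff_x1_y1y2_neg_ends_shape[OF n] that by blast
    with neg_ends_shape_FC[OF n this] that show ?thesis by auto
  qed
  have "card ?S \<le> 1"
    using neg_ends_shape_2_1_unique[OF n] shape finite_FC by (auto simp: card_le_Suc0_iff_eq)
  have "QP_coeff n (FC n) (single_exp 1 (n - 2)) exp_1_2 = (\<Sum>w\<in>?S. ?c w)"
    unfolding QP_coeff_def by (rule sum.mono_neutral_right[OF finite_FC]) auto
  also have "\<dots> \<le> (\<Sum>w\<in>?S. 1)" by (rule sum_mono) (rule poirier_coeff_x1_y1y2_le_1[OF n])
  also have "\<dots> \<le> 1" using \<open>card ?S \<le> 1\<close> by simp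
  finally show ?thesis .
qed

lemma QP_coeff_FC_x2_y1y2_ge_2:
  assumes n: "3 \<le> n"
  shows "2 \<le> QP_coeff n (FC n) (single_exp 2 (n - 2)) exp_1_2"
proof -
  have "s0s1s0 1 \<noteq> s0s2s1s0 1" by (simp add: s0s1s0_apply s0s2s1s0_apply)
  then have ne: "s0s1s0 \<noteq> s0s2s1s0" by auto
  have "2 \<le> (\<Sum>w\<in>{s0s1s0, s0s2s1s0}. poirier_coeff n w (single_exp 2 (n - 2)) exp_1_2)"
    using ne poirier_coeff_x2_y1y2_pos[OF n, of s0s1s0] poirier_coeff_x2_y1y2_pos[OF n, of s0s2s1s0]
    by simp
  also have "\<dots> \<le> QP_coeff n (FC n) (single_exp 2 (n - 2)) exp_1_2"
    unfolding QP_coeff_def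
    by (rule sum_mono2[OF finite_FC]) (use s0s1s0_in_FC[OF n] s0s2s1s0_in_FC[OF n] in auto)
  finally show ?thesis .
qed

theorem mainTheorem15:
  fixes n :: nat
  assumes "n > 2"
  shows "\<not> poirier_schur_positive n (FC n)"
proof
  assume psp: "poirier_schur_positive n (FC n)"
  have n: "3 \<le> n" using assms by simp
  define \<sigma> where "\<sigma> k = (if k = 1 then 2 else if k = 2 then 1 else k)" for k :: nat
  have "bij \<sigma>" by (rule bij_betw_byWitness[where f' = \<sigma>]) (auto simp: \<sigma>_def)
  moreover have "\<sigma> 0 = 0" by (simp add: \<sigma>_def)
  ultimately
  have "QP_coeff n (FC n) (single_exp 2 (n - 2) \<circ> \<sigma>) exp_1_2 = QP_coeff n (FC n) (single_exp 2 (n - 2)) exp_1_2"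
    using psp unfolding poirier_schur_positive_def by blast
  moreover have "single_exp 2 (n - 2) \<circ> \<sigma> = single_exp 1 (n - 2)"
    by (auto simp: \<sigma>_def single_exp_def)
  ultimately show False using QP_coeff_FC_x1_y1y2_le_1[OF n] QP_coeff_FC_x2_y1y2_ge_2[OF n] by simp
qed

end
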